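(* Consider the TAR(1) model $Y_t=\alpha Y_{t-1}+\varepsilon_t$ if $Y_{t-1}>r$, $Y_t=\beta Y_{t-1}+\varepsilon_t$ if $Y_{t-1}\le r$ ($t\ge1$), and assume one of: (H1) $\alpha>1$, $\beta\le1$, $r=0$ and $\mathbb{E}Y_0^2<\infty$; (H2) $\alpha>1$, $\beta\le 1$, $r\ne0$, $\mathbb{E}Y_0^2<\infty$, and $\mathbb{P}(\varepsilon_1\le x)<1$ for every $x\in\mathbb{R}$. Then (i) $\mathbb{E}|Y_n|=O(\alpha^n)$ as $n\to\infty$; and (ii) if $\limsup_{n\to\infty}Y_n=\infty$ a.s., then $\lim_{n\to\infty}Y_n/n=\infty$ a.s.
   Context: Standing assumptions: $\{\varepsilon_t\}_{t\ge1}$ is an i.i.d. sequence of real random variables with $\mathbb{E}\varepsilon_1=0$ and $\mathbb{E}\varepsilon_1^2=\sigma^2\in(0,\infty)$; the initial value $Y_0$ is a random variable independent of $\{\varepsilon_t\}_{t\ge1}$. *)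

theory Defs
  imports "HOL-Probability.Probability" "HOL-Library.Landau_Symbols"
begin

fun tar :: "real \<Rightarrow> real \<Rightarrow> real \<Rightarrow> ('a \<Rightarrow> real) \<Rightarrow> (nat \<Rightarrow> 'a \<Rightarrow> real) \<Rightarrow> nat \<Rightarrow> 'a \<Rightarrow> real" where
  "tar \<alpha> \<beta> r Y0 \<epsilon> 0 \<omega> = Y0 \<omega>"
| "tar \<alpha> \<beta> r Y0 \<epsilon> (Suc n) \<omega> =
     (if tar \<alpha> \<beta> r Y0 \<epsilon> n \<omega> > r then \<alpha> * tar \<alpha> \<beta> r Y0 \<epsilon> n \<omega>
      else \<beta> * tar \<alpha> \<beta> r Y0 \<epsilon> n \<omega>) + \<epsilon> (Suc n) \<omega>"

end

theory Submission
  imports Defs "HOL-Real_Asymp.Real_Asymp"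
begin

(* (i) Writing Y_n = P_n - N_n with P_n, N_n its positive and negative parts, one step of the
   recursion increases N_n by at most a constant plus |eps|, so E N_n grows linearly, while
   E P_{n+1} <= alpha E P_n + |beta| E N_n + const.  A general lemma on affine recursions
   a_{n+1} <= alpha a_n + u n + v then gives E|Y_n| = E P_n + E N_n = O(alpha^n).

   (ii) Fix a level K > max r 0.  If the path passes above K (first at time m) and afterwards
   every innovation satisfies eps_{m+1+j} >= -(alpha-1)/2 K g^j, g = (alpha+1)/2, then the
   path stays in the alpha-regime and Y_{m+j} >= K g^j, so Y_n / n -> infinity.  The first
   passage event at m is independent of eps_{m+1+j}, so Chebyshev's inequality bounds the
   probability of the complementary escape events by O(1/K^2).  Letting K -> infinity shows
   that a.s. every path unbounded above satisfies Y_n / n -> infinity. *)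

definition tar_map :: "real \<Rightarrow> real \<Rightarrow> real \<Rightarrow> real \<Rightarrow> real" where
  "tar_map \<alpha> \<beta> r y = (if y > r then \<alpha> * y else \<beta> * y)"

lemma tar_Suc_map:
  "tar \<alpha> \<beta> r Y0 \<epsilon> (Suc n) \<omega> = tar_map \<alpha> \<beta> r (tar \<alpha> \<beta> r Y0 \<epsilon> n \<omega>) + \<epsilon> (Suc n) \<omega>"
  by (simp add: tar_map_def)

lemma tar_measurable [measurable]:
  assumes "\<And>t. t \<ge> 1 \<Longrightarrow> \<epsilon> t \<in> borel_measurable M" and "Y0 \<in> borel_measurable M"
  shows "tar \<alpha> \<beta> r Y0 \<epsilon> n \<in> borel_measurable M"
proof (induction n)
  case (Suc n)
  have "\<epsilon> (Suc n) \<in> borel_measurable M" using assms(1) by simp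
  with Suc show ?case by simp
qed (simp add: assms(2))

lemma tar_map_abs_le: "\<bar>tar_map \<alpha> \<beta> r y\<bar> \<le> (\<bar>\<alpha>\<bar> + \<bar>\<beta>\<bar>) * \<bar>y\<bar>"
  by (simp add: tar_map_def abs_mult distrib_right mult_nonneg_nonneg)

(* For alpha > 1 and beta <= 1 the map pushes values down by at most an additive constant
   beyond the negative part of its argument: negative parts grow at most linearly. *)
lemma tar_map_lower:
  assumes "\<alpha> > 1" "\<beta> \<le> 1"
  shows "- tar_map \<alpha> \<beta> r y \<le> max 0 (- y) + (\<alpha> + \<bar>\<beta>\<bar>) * \<bar>r\<bar>"
proof -
  have r_parts: "\<alpha> * \<bar>r\<bar> \<ge> 0" "\<bar>\<beta>\<bar> * \<bar>r\<bar> \<ge> 0" "(\<alpha> + \<bar>\<beta>\<bar>) * \<bar>r\<bar> = \<alpha> * \<bar>r\<bar> + \<bar>\<beta>\<bar> * \<bar>r\<bar>"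
    using assms by (simp_all add: distrib_right)
  show ?thesis
  proof (cases "y > r")
    case True
    then have "\<alpha> * r \<le> \<alpha> * y" using assms by simp
    moreover have "- (\<alpha> * r) \<le> \<alpha> * \<bar>r\<bar>" using assms by (simp add: abs_if)
    moreover have "tar_map \<alpha> \<beta> r y = \<alpha> * y" using True by (simp add: tar_map_def)
    ultimately show ?thesis using r_parts max.cobounded1[of 0 "- y"] by linarith
  next
    case False
    have "- (\<beta> * y) \<le> max 0 (- y) + \<bar>\<beta>\<bar> * \<bar>r\<bar>"
    proof (cases "\<beta> \<le> 0")
      case True
      then have "\<beta> * r \<le> \<beta> * y" using False by (simp add: mult_left_mono_neg)
      moreover have "- (\<beta> * r) \<le> \<bar>\<beta>\<bar> * \<bar>r\<bar>" by (simp add: abs_mult[symmetric])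
      ultimately show ?thesis by linarith
    next
      case \<beta>_pos: False
      show ?thesis
      proof (cases "y < 0")
        case True
        then have "- (\<beta> * y) \<le> - y" and "max 0 (- y) = - y"
          using mult_left_le_one_le[of "- y" \<beta>] assms \<beta>_pos by simp_all
        then show ?thesis using r_parts by linarith
      next
        case False
        then have "\<beta> * y \<ge> 0" using \<beta>_pos by simp
        then show ?thesis using r_parts max.cobounded1[of 0 "- y"] by linarith
      qed
    qed
    moreover have "tar_map \<alpha> \<beta> r y = \<beta> * y" using False by (simp add: tar_map_def)
    ultimately show ?thesis using r_parts by linarith
  qed
qed

lemma tar_map_upper:
  assumes "\<alpha> > 1"
  shows "tar_map \<alpha> \<beta> r y \<le> \<alpha> * max 0 y + \<bar>\<beta>\<bar> * max 0 (- y) + \<bar>\<beta>\<bar> * \<bar>r\<bar>"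
proof -
  have nonneg: "\<alpha> * max 0 y \<ge> 0" "\<bar>\<beta>\<bar> * max 0 (- y) \<ge> 0" "\<bar>\<beta>\<bar> * \<bar>r\<bar> \<ge> 0"
    using assms by simp_all
  show ?thesis
  proof (cases "y > r")
    case True
    have "\<alpha> * y \<le> \<alpha> * max 0 y" using assms by (intro mult_left_mono) auto
    moreover have "tar_map \<alpha> \<beta> r y = \<alpha> * y" using True by (simp add: tar_map_def)
    ultimately show ?thesis using nonneg by linarith
  next
    case False
    have "\<bar>y\<bar> \<le> max 0 (- y) + \<bar>r\<bar>" using False by linarith
    then have "\<bar>\<beta>\<bar> * \<bar>y\<bar> \<le> \<bar>\<beta>\<bar> * max 0 (- y) + \<bar>\<beta>\<bar> * \<bar>r\<bar>"
      by (metis abs_ge_zero distrib_left mult_left_mono)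
    moreover have "\<beta> * y \<le> \<bar>\<beta>\<bar> * \<bar>y\<bar>" by (simp add: abs_mult[symmetric])
    moreover have "tar_map \<alpha> \<beta> r y = \<beta> * y" using False by (simp add: tar_map_def)
    ultimately show ?thesis using nonneg by linarith
  qed
qed

lemma tar_step_neg_part:
  assumes "\<alpha> > 1" "\<beta> \<le> 1"
  shows "max 0 (- (tar_map \<alpha> \<beta> r y + e)) \<le> max 0 (- y) + (\<alpha> + \<bar>\<beta>\<bar>) * \<bar>r\<bar> + \<bar>e\<bar>"
proof -
  have "0 \<le> (\<alpha> + \<bar>\<beta>\<bar>) * \<bar>r\<bar>" using assms by simp
  then show ?thesis
    unfolding max.bounded_iff
    using tar_map_lower[OF assms, of r y] abs_ge_minus_self[of e] max.cobounded1[of 0 "- y"]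
    by (intro conjI) linarith+
qed

lemma tar_step_pos_part:
  assumes "\<alpha> > 1"
  shows "max 0 (tar_map \<alpha> \<beta> r y + e) \<le> \<alpha> * max 0 y + \<bar>\<beta>\<bar> * max 0 (- y) + \<bar>\<beta>\<bar> * \<bar>r\<bar> + \<bar>e\<bar>"
proof -
  have "0 \<le> \<alpha> * max 0 y + \<bar>\<beta>\<bar> * max 0 (- y) + \<bar>\<beta>\<bar> * \<bar>r\<bar>" using assms by simp
  then show ?thesis
    unfolding max.bounded_iff using tar_map_upper[OF assms, of \<beta> r y] abs_ge_self[of e]
    by (intro conjI) linarith+
qed

(* A nonnegative sequence with a_{n+1} <= alpha a_n + u n + v, alpha > 1, is O(alpha^n):
   by induction, a_n <= (a_0 + t) alpha^n - s n - t with s = u/(alpha-1), t = (v+s)/(alpha-1). *)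
lemma affine_recursion_bigo:
  fixes a :: "nat \<Rightarrow> real" and \<alpha> u v :: real
  assumes \<alpha>: "\<alpha> > 1" and uv: "u \<ge> 0" "v \<ge> 0" and nonneg: "\<And>n. a n \<ge> 0"
    and rec: "\<And>n. a (Suc n) \<le> \<alpha> * a n + u * n + v"
  shows "a \<in> O(\<lambda>n. \<alpha> ^ n)"
proof -
  define s where "s = u / (\<alpha> - 1)"
  define t where "t = (v + s) / (\<alpha> - 1)"
  have u: "u = (\<alpha> - 1) * s" and v: "v = (\<alpha> - 1) * t - s" and st: "s \<ge> 0" "t \<ge> 0"
    using \<alpha> uv by (simp_all add: s_def t_def)
  have explicit: "a n \<le> (a 0 + t) * \<alpha> ^ n - s * n - t" for n
  proof (induction n)
    case (Suc n)
    have "\<alpha> * a n \<le> \<alpha> * ((a 0 + t) * \<alpha> ^ n - s * n - t)"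
      using Suc \<alpha> by (intro mult_left_mono) auto
    then have "a (Suc n) \<le> \<alpha> * ((a 0 + t) * \<alpha> ^ n - s * n - t) + u * n + v"
      using rec[of n] by linarith
    also have "\<dots> = (a 0 + t) * \<alpha> ^ Suc n - s * Suc n - t"
      unfolding u v by (simp add: algebra_simps)
    finally show ?case .
  qed simp
  have "a n \<le> (a 0 + t) * \<alpha> ^ n" for n
    using explicit[of n] st mult_nonneg_nonneg[of s "real n"] by linarith
  then show ?thesis
    by (intro bigoI[where c = "a 0 + t"] always_eventually) (use \<alpha> in \<open>simp add: nonneg abs_of_pos\<close>)
qed

(* Two nonnegative sequences with q_{n+1} <= q_n + c and p_{n+1} <= alpha p_n + b q_n + d:
   q grows linearly, hence p satisfies an affine recursion, and p + q = O(alpha^n). *)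
lemma coupled_recursion_bigo:
  fixes p q :: "nat \<Rightarrow> real" and \<alpha> b c d :: real
  assumes \<alpha>: "\<alpha> > 1" and bcd: "b \<ge> 0" "c \<ge> 0" "d \<ge> 0"
    and nonneg: "\<And>n. p n \<ge> 0" "\<And>n. q n \<ge> 0"
    and q_rec: "\<And>n. q (Suc n) \<le> q n + c"
    and p_rec: "\<And>n. p (Suc n) \<le> \<alpha> * p n + b * q n + d"
  shows "(\<lambda>n. p n + q n) \<in> O(\<lambda>n. \<alpha> ^ n)"
proof -
  have q_lin: "q n \<le> q 0 + c * n" for n
  proof (induction n)
    case (Suc n)
    then show ?case using q_rec[of n] by (simp add: algebra_simps)
  qed simp
  have "q \<in> O(\<lambda>n. \<alpha> ^ n)"
  proof (rule affine_recursion_bigo[OF \<alpha> order.refl bcd(2) nonneg(2)])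
    show "q (Suc n) \<le> \<alpha> * q n + 0 * real n + c" for n
      using q_rec[of n] \<alpha> nonneg(2)[of n] mult_right_mono[of 1 \<alpha> "q n"] by simp
  qed
  moreover have "p \<in> O(\<lambda>n. \<alpha> ^ n)"
  proof (rule affine_recursion_bigo[OF \<alpha> _ _ nonneg(1)])
    show "p (Suc n) \<le> \<alpha> * p n + (b * c) * real n + (b * q 0 + d)" for n
      using p_rec[of n] mult_left_mono[OF q_lin[of n] bcd(1)] by (simp add: algebra_simps)
  qed (use bcd nonneg(2)[of 0] in auto)
  ultimately show ?thesis by (intro sum_in_bigo)
qed

context prob_space
begin

lemma same_distr_integrable:
  fixes X Z :: "'a \<Rightarrow> real" and f :: "real \<Rightarrow> real"
  assumes "X \<in> borel_measurable M" "Z \<in> borel_measurable M"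
    and "distr M borel X = distr M borel Z" and "f \<in> borel_measurable borel"
    and "integrable M (\<lambda>\<omega>. f (Z \<omega>))"
  shows "integrable M (\<lambda>\<omega>. f (X \<omega>))"
proof -
  have "integrable (distr M borel Z) f" using assms(5) integrable_distr_eq[OF assms(2,4)] by simp
  then have "integrable (distr M borel X) f" by (simp add: assms(3))
  then show ?thesis using integrable_distr_eq[OF assms(1,4)] by simp
qed

lemma same_distr_expectation:
  fixes X Z :: "'a \<Rightarrow> real" and f :: "real \<Rightarrow> real"
  assumes "X \<in> borel_measurable M" "Z \<in> borel_measurable M"
    and "distr M borel X = distr M borel Z" and "f \<in> borel_measurable borel"
  shows "expectation (\<lambda>\<omega>. f (X \<omega>)) = expectation (\<lambda>\<omega>. f (Z \<omega>))"
  using assms integral_distr[of X M borel f] integral_distr[of Z M borel f] by simp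

lemma same_distr_prob:
  fixes X Z :: "'a \<Rightarrow> real"
  assumes "X \<in> borel_measurable M" "Z \<in> borel_measurable M"
    and "distr M borel X = distr M borel Z" and "S \<in> sets borel"
  shows "prob {\<omega>\<in>space M. X \<omega> \<in> S} = prob {\<omega>\<in>space M. Z \<omega> \<in> S}"
  using assms measure_distr[of X M borel S] measure_distr[of Z M borel S]
  by (simp add: vimage_def Int_def conj_commute)

lemma innovations_integrable:
  fixes \<epsilon> :: "nat \<Rightarrow> 'a \<Rightarrow> real"
  assumes rv_eps: "\<And>t. t \<ge> 1 \<Longrightarrow> \<epsilon> t \<in> borel_measurable M"
    and ident: "\<And>t. t \<ge> 1 \<Longrightarrow> distr M borel (\<epsilon> t) = distr M borel (\<epsilon> 1)"
    and int1: "integrable M (\<epsilon> 1)" and t: "t \<ge> 1"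
  shows "integrable M (\<epsilon> t)"
  using same_distr_integrable[OF rv_eps[OF t] rv_eps[OF order.refl] ident[OF t], of id] int1 by simp

lemma tar_integrable:
  assumes rv_eps: "\<And>t. t \<ge> 1 \<Longrightarrow> \<epsilon> t \<in> borel_measurable M"
    and rv_Y0: "Y0 \<in> borel_measurable M"
    and int_eps: "\<And>t. t \<ge> 1 \<Longrightarrow> integrable M (\<epsilon> t)"
    and int_Y0: "integrable M Y0"
  shows "integrable M (tar \<alpha> \<beta> r Y0 \<epsilon> n)"
proof (induction n)
  case (Suc n)
  have "integrable M (\<lambda>\<omega>. (\<bar>\<alpha>\<bar> + \<bar>\<beta>\<bar>) * \<bar>tar \<alpha> \<beta> r Y0 \<epsilon> n \<omega>\<bar> + \<bar>\<epsilon> (Suc n) \<omega>\<bar>)"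
    using Suc int_eps[of "Suc n"] by auto
  moreover have "tar \<alpha> \<beta> r Y0 \<epsilon> (Suc n) \<in> borel_measurable M"
    by (rule tar_measurable[OF rv_eps rv_Y0])
  moreover have "AE \<omega> in M. norm (tar \<alpha> \<beta> r Y0 \<epsilon> (Suc n) \<omega>) \<le>
      norm ((\<bar>\<alpha>\<bar> + \<bar>\<beta>\<bar>) * \<bar>tar \<alpha> \<beta> r Y0 \<epsilon> n \<omega>\<bar> + \<bar>\<epsilon> (Suc n) \<omega>\<bar>)"
  proof (rule AE_I2)
    fix \<omega>
    have "\<bar>tar \<alpha> \<beta> r Y0 \<epsilon> (Suc n) \<omega>\<bar> \<le> (\<bar>\<alpha>\<bar> + \<bar>\<beta>\<bar>) * \<bar>tar \<alpha> \<beta> r Y0 \<epsilon> n \<omega>\<bar> + \<bar>\<epsilon> (Suc n) \<omega>\<bar>"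
      using tar_map_abs_le[of \<alpha> \<beta> r "tar \<alpha> \<beta> r Y0 \<epsilon> n \<omega>"]
        abs_triangle_ineq[of "tar_map \<alpha> \<beta> r (tar \<alpha> \<beta> r Y0 \<epsilon> n \<omega>)" "\<epsilon> (Suc n) \<omega>"]
      unfolding tar_Suc_map by linarith
    then show "norm (tar \<alpha> \<beta> r Y0 \<epsilon> (Suc n) \<omega>) \<le>
        norm ((\<bar>\<alpha>\<bar> + \<bar>\<beta>\<bar>) * \<bar>tar \<alpha> \<beta> r Y0 \<epsilon> n \<omega>\<bar> + \<bar>\<epsilon> (Suc n) \<omega>\<bar>)"
      by (simp add: abs_of_nonneg add_nonneg_nonneg)
  qed
  ultimately show ?case
    by (rule Bochner_Integration.integrable_bound)
qed (simp add: int_Y0)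

lemma tar_part_expectation_steps:
  fixes \<epsilon> :: "nat \<Rightarrow> 'a \<Rightarrow> real" and Y0 :: "'a \<Rightarrow> real" and \<alpha> \<beta> r :: real
  assumes rv_eps: "\<And>t. t \<ge> 1 \<Longrightarrow> \<epsilon> t \<in> borel_measurable M"
    and rv_Y0: "Y0 \<in> borel_measurable M"
    and ident: "\<And>t. t \<ge> 1 \<Longrightarrow> distr M borel (\<epsilon> t) = distr M borel (\<epsilon> 1)"
    and int_eps: "\<And>t. t \<ge> 1 \<Longrightarrow> integrable M (\<epsilon> t)"
    and int_Y0: "integrable M Y0"
    and \<alpha>: "\<alpha> > 1" and \<beta>: "\<beta> \<le> 1"
  defines "Y \<equiv> tar \<alpha> \<beta> r Y0 \<epsilon>" and "e \<equiv> expectation (\<lambda>\<omega>. \<bar>\<epsilon> 1 \<omega>\<bar>)"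
  shows "expectation (\<lambda>\<omega>. max 0 (- Y (Suc n) \<omega>)) \<le>
           expectation (\<lambda>\<omega>. max 0 (- Y n \<omega>)) + (\<alpha> + \<bar>\<beta>\<bar>) * \<bar>r\<bar> + e"
    and "expectation (\<lambda>\<omega>. max 0 (Y (Suc n) \<omega>)) \<le>
           \<alpha> * expectation (\<lambda>\<omega>. max 0 (Y n \<omega>)) + \<bar>\<beta>\<bar> * expectation (\<lambda>\<omega>. max 0 (- Y n \<omega>)) +
           \<bar>\<beta>\<bar> * \<bar>r\<bar> + e"
proof -
  have Y_int: "integrable M (Y k)" for k
    unfolding Y_def by (rule tar_integrable[where \<epsilon> = \<epsilon>, OF rv_eps rv_Y0 int_eps int_Y0])
  have eps_int: "integrable M (\<lambda>\<omega>. \<bar>\<epsilon> (Suc n) \<omega>\<bar>)"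
    using int_eps[of "Suc n"] by simp
  have eps_exp: "expectation (\<lambda>\<omega>. \<bar>\<epsilon> (Suc n) \<omega>\<bar>) = e"
    using same_distr_expectation[OF rv_eps[of "Suc n"] rv_eps[of 1] ident[of "Suc n"], of abs]
    by (simp add: e_def)
  have neg_step: "max 0 (- Y (Suc n) \<omega>) \<le> max 0 (- Y n \<omega>) + (\<alpha> + \<bar>\<beta>\<bar>) * \<bar>r\<bar> + \<bar>\<epsilon> (Suc n) \<omega>\<bar>" for \<omega>
    using tar_step_neg_part[OF \<alpha> \<beta>, of r "Y n \<omega>" "\<epsilon> (Suc n) \<omega>"] by (simp only: Y_def tar_Suc_map)
  have pos_step: "max 0 (Y (Suc n) \<omega>) \<le>
      \<alpha> * max 0 (Y n \<omega>) + \<bar>\<beta>\<bar> * max 0 (- Y n \<omega>) + \<bar>\<beta>\<bar> * \<bar>r\<bar> + \<bar>\<epsilon> (Suc n) \<omega>\<bar>" for \<omega>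
    using tar_step_pos_part[OF \<alpha>, of \<beta> r "Y n \<omega>" "\<epsilon> (Suc n) \<omega>"] by (simp only: Y_def tar_Suc_map)
  have "expectation (\<lambda>\<omega>. max 0 (- Y (Suc n) \<omega>)) \<le>
      expectation (\<lambda>\<omega>. max 0 (- Y n \<omega>) + (\<alpha> + \<bar>\<beta>\<bar>) * \<bar>r\<bar> + \<bar>\<epsilon> (Suc n) \<omega>\<bar>)"
    using Y_int eps_int neg_step
    by (intro integral_mono Bochner_Integration.integrable_add integrable_const) auto
  then show "expectation (\<lambda>\<omega>. max 0 (- Y (Suc n) \<omega>)) \<le>
      expectation (\<lambda>\<omega>. max 0 (- Y n \<omega>)) + (\<alpha> + \<bar>\<beta>\<bar>) * \<bar>r\<bar> + e"
    using Y_int eps_int eps_exp by (simp add: prob_space)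
  have "expectation (\<lambda>\<omega>. max 0 (Y (Suc n) \<omega>)) \<le>
      expectation (\<lambda>\<omega>. \<alpha> * max 0 (Y n \<omega>) + \<bar>\<beta>\<bar> * max 0 (- Y n \<omega>) + \<bar>\<beta>\<bar> * \<bar>r\<bar> + \<bar>\<epsilon> (Suc n) \<omega>\<bar>)"
    using Y_int eps_int pos_step
    by (intro integral_mono Bochner_Integration.integrable_add Bochner_Integration.integrable_mult_right
        integrable_const) auto
  then show "expectation (\<lambda>\<omega>. max 0 (Y (Suc n) \<omega>)) \<le>
      \<alpha> * expectation (\<lambda>\<omega>. max 0 (Y n \<omega>)) + \<bar>\<beta>\<bar> * expectation (\<lambda>\<omega>. max 0 (- Y n \<omega>)) +
      \<bar>\<beta>\<bar> * \<bar>r\<bar> + e"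
    using Y_int eps_int eps_exp by (simp add: prob_space)
qed

lemma tar_expectation_abs_bigo:
  assumes rv_eps: "\<And>t. t \<ge> 1 \<Longrightarrow> \<epsilon> t \<in> borel_measurable M"
    and rv_Y0: "Y0 \<in> borel_measurable M"
    and ident: "\<And>t. t \<ge> 1 \<Longrightarrow> distr M borel (\<epsilon> t) = distr M borel (\<epsilon> 1)"
    and int_eps: "\<And>t. t \<ge> 1 \<Longrightarrow> integrable M (\<epsilon> t)"
    and int_Y0: "integrable M Y0"
    and \<alpha>: "\<alpha> > 1" and \<beta>: "\<beta> \<le> 1"
  shows "(\<lambda>n. expectation (\<lambda>\<omega>. \<bar>tar \<alpha> \<beta> r Y0 \<epsilon> n \<omega>\<bar>)) \<in> O(\<lambda>n. \<alpha> ^ n)"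
proof -
  define Y where "Y = tar \<alpha> \<beta> r Y0 \<epsilon>"
  define p where "p n = expectation (\<lambda>\<omega>. max 0 (Y n \<omega>))" for n
  define q where "q n = expectation (\<lambda>\<omega>. max 0 (- Y n \<omega>))" for n
  have "expectation (\<lambda>\<omega>. \<bar>Y n \<omega>\<bar>) = p n + q n" for n
  proof -
    have Y_int: "integrable M (Y n)"
      unfolding Y_def by (rule tar_integrable[where \<epsilon> = \<epsilon>, OF rv_eps rv_Y0 int_eps int_Y0])
    have "(\<lambda>\<omega>. \<bar>Y n \<omega>\<bar>) = (\<lambda>\<omega>. max 0 (Y n \<omega>) + max 0 (- Y n \<omega>))" by (auto simp: fun_eq_iff)
    then show ?thesis using Y_int by (simp add: p_def q_def)
  qed
  moreover have "(\<lambda>n. p n + q n) \<in> O(\<lambda>n. \<alpha> ^ n)"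
  proof (rule coupled_recursion_bigo[OF \<alpha>])
    note steps = tar_part_expectation_steps[where \<epsilon> = \<epsilon>, OF rv_eps rv_Y0 ident int_eps int_Y0 \<alpha> \<beta>]
    show "q (Suc n) \<le> q n + ((\<alpha> + \<bar>\<beta>\<bar>) * \<bar>r\<bar> + expectation (\<lambda>\<omega>. \<bar>\<epsilon> 1 \<omega>\<bar>))" for n
      using steps(1)[of r n] unfolding q_def Y_def by linarith
    show "p (Suc n) \<le> \<alpha> * p n + \<bar>\<beta>\<bar> * q n + (\<bar>\<beta>\<bar> * \<bar>r\<bar> + expectation (\<lambda>\<omega>. \<bar>\<epsilon> 1 \<omega>\<bar>))" for n
      using steps(2)[of r n] unfolding p_def q_def Y_def by linarith
  qed (use \<alpha> in \<open>auto simp: p_def q_def\<close>)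
  ultimately show ?thesis by (simp add: Y_def)
qed

end

definition first_passage :: "(nat \<Rightarrow> 'a \<Rightarrow> real) \<Rightarrow> real \<Rightarrow> nat \<Rightarrow> 'a \<Rightarrow> bool" where
  "first_passage Y K m \<omega> \<longleftrightarrow> Y m \<omega> > K \<and> (\<forall>k<m. Y k \<omega> \<le> K)"

lemma first_passage_unique:
  assumes "first_passage Y K m \<omega>" "first_passage Y K n \<omega>"
  shows "m = n"
  using assms unfolding first_passage_def by (metis linorder_neqE_nat not_less)

lemma first_passage_exists:
  assumes "limsup (\<lambda>n. ereal (Y n \<omega>)) = \<infinity>"
  shows "\<exists>m. first_passage Y K m \<omega>"
proof -
  have "\<exists>n. Y n \<omega> > K"
  proof (rule ccontr)
    assume "\<not> (\<exists>n. Y n \<omega> > K)"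
    then have "limsup (\<lambda>n. ereal (Y n \<omega>)) \<le> ereal K"
      by (intro Limsup_bounded always_eventually) (auto simp: not_less)
    with assms show False by simp
  qed
  from LeastI_ex[OF this] not_less_Least[where P = "\<lambda>n. Y n \<omega> > K"]
  show ?thesis unfolding first_passage_def by (meson not_less)
qed

lemma first_passage_sets:
  assumes "\<And>k. Y k \<in> borel_measurable M"
  shows "{\<omega>\<in>space M. first_passage Y K m \<omega>} \<in> sets M"
  using assms unfolding first_passage_def by measurable

(* Once above a level K > max r 0, the path stays in the alpha-regime and grows at least like
   K g^j, g = (alpha+1)/2, as long as each innovation eps_{m+1+j} >= -(alpha-1)/2 K g^j. *)
lemma tar_geometric_growth:
  fixes \<alpha> \<beta> r K :: real
  defines "g \<equiv> (\<alpha> + 1) / 2"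
  assumes \<alpha>: "\<alpha> > 1" and K: "K > 0" "K > r"
    and start: "tar \<alpha> \<beta> r Y0 \<epsilon> m \<omega> > K"
    and noise: "\<And>j. \<epsilon> (m + 1 + j) \<omega> \<ge> - ((\<alpha> - 1) / 2 * K * g ^ j)"
  shows "tar \<alpha> \<beta> r Y0 \<epsilon> (m + j) \<omega> \<ge> K * g ^ j"
proof (induction j)
  case (Suc j)
  define y where "y = tar \<alpha> \<beta> r Y0 \<epsilon> (m + j) \<omega>"
  have g: "g \<ge> 1" using \<alpha> by (simp add: g_def)
  have "K \<le> K * g ^ j" using g K by (simp add: one_le_power)
  then have "y > r" using Suc.IH K unfolding y_def by linarith
  then have step: "tar \<alpha> \<beta> r Y0 \<epsilon> (m + Suc j) \<omega> = \<alpha> * y + \<epsilon> (m + 1 + j) \<omega>"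
    by (simp add: y_def)
  have "(\<alpha> - 1) / 2 * (K * g ^ j) \<le> (\<alpha> - 1) / 2 * y"
    using Suc.IH \<alpha> by (intro mult_left_mono) (simp_all add: y_def)
  then have "\<epsilon> (m + 1 + j) \<omega> \<ge> - ((\<alpha> - 1) / 2 * y)"
    using noise[of j] by (simp add: mult.assoc)
  then have "tar \<alpha> \<beta> r Y0 \<epsilon> (m + Suc j) \<omega> \<ge> \<alpha> * y - (\<alpha> - 1) / 2 * y"
    unfolding step by simp
  also have "\<alpha> * y - (\<alpha> - 1) / 2 * y = g * y" by (simp add: g_def field_simps)
  also have "g * y \<ge> g * (K * g ^ j)" using Suc g by (simp add: y_def)
  finally show ?case by (simp add: algebra_simps)
qed (use start in simp)

lemma tar_superlinear:
  fixes \<alpha> \<beta> r K :: real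
  assumes \<alpha>: "\<alpha> > 1" and K: "K > 0" "K > r"
    and start: "tar \<alpha> \<beta> r Y0 \<epsilon> m \<omega> > K"
    and noise: "\<And>j. \<epsilon> (m + 1 + j) \<omega> \<ge> - ((\<alpha> - 1) / 2 * K * ((\<alpha> + 1) / 2) ^ j)"
  shows "filterlim (\<lambda>n. tar \<alpha> \<beta> r Y0 \<epsilon> n \<omega> / real n) at_top sequentially"
proof -
  define g where "g = (\<alpha> + 1) / 2"
  have g: "g > 1" using \<alpha> by (simp add: g_def)
  have lim: "filterlim (\<lambda>n::nat. K / g ^ m * g ^ n / real n) at_top at_top"
    using g K by real_asymp
  have lower: "K / g ^ m * g ^ n / real n \<le> tar \<alpha> \<beta> r Y0 \<epsilon> n \<omega> / real n" if "n \<ge> m" for n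
  proof -
    obtain j where n: "n = m + j" using \<open>n \<ge> m\<close> le_Suc_ex by blast
    have "K / g ^ m * g ^ n = K * g ^ j" using g by (simp add: n power_add)
    also have "\<dots> \<le> tar \<alpha> \<beta> r Y0 \<epsilon> n \<omega>"
      using tar_geometric_growth[OF \<alpha> K start noise] by (simp add: n g_def)
    finally show ?thesis by (rule divide_right_mono) simp
  qed
  show ?thesis
    by (rule filterlim_at_top_mono[OF lim]) (use lower in \<open>auto simp: eventually_sequentially\<close>)
qed

lemma tar_escape:
  fixes \<alpha> \<beta> r K :: real
  defines "c \<equiv> (\<alpha> - 1) / 2" and "g \<equiv> (\<alpha> + 1) / 2"
  assumes \<alpha>: "\<alpha> > 1" and K: "K > 0" "K > r"
    and unbounded: "limsup (\<lambda>n. ereal (tar \<alpha> \<beta> r Y0 \<epsilon> n \<omega>)) = \<infinity>"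
    and not_superlinear: "\<not> filterlim (\<lambda>n. tar \<alpha> \<beta> r Y0 \<epsilon> n \<omega> / real n) at_top sequentially"
  shows "\<exists>m j. first_passage (tar \<alpha> \<beta> r Y0 \<epsilon>) K m \<omega> \<and> \<epsilon> (m + 1 + j) \<omega> < - (c * K * g ^ j)"
proof -
  obtain m where m: "first_passage (tar \<alpha> \<beta> r Y0 \<epsilon>) K m \<omega>"
    using first_passage_exists[of "tar \<alpha> \<beta> r Y0 \<epsilon>" \<omega> K, OF unbounded] by blast
  then have start: "tar \<alpha> \<beta> r Y0 \<epsilon> m \<omega> > K" by (simp add: first_passage_def)
  have "\<not> (\<forall>j. \<epsilon> (m + 1 + j) \<omega> \<ge> - ((\<alpha> - 1) / 2 * K * ((\<alpha> + 1) / 2) ^ j))"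
    using tar_superlinear[OF \<alpha> K start] not_superlinear by blast
  then obtain j where "\<epsilon> (m + 1 + j) \<omega> < - (c * K * g ^ j)"
    unfolding c_def g_def by (auto simp: not_le)
  with m show ?thesis by blast
qed

(* Coordinates of the product space are measurable, also outside the index set (where they are
   constant); thus the TAR recursion is measurable on finite-dimensional path spaces. *)
lemma component_measurable_PiM:
  "(\<lambda>x. x t) \<in> borel_measurable (PiM I (\<lambda>_. borel :: real measure))"
proof (cases "t \<in> I")
  case True
  then show ?thesis by (rule measurable_component_singleton)
next
  case False
  then have "(\<lambda>x. x t) \<in> borel_measurable (PiM I (\<lambda>_. borel :: real measure)) \<longleftrightarrow>
      (\<lambda>_. undefined :: real) \<in> borel_measurable (PiM I (\<lambda>_. borel :: real measure))"
    by (intro measurable_cong) (auto simp: space_PiM PiE_def extensional_def)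
  then show ?thesis by simp
qed

lemma tar_restrict:
  fixes Y0 :: "'a \<Rightarrow> real"
  assumes "k \<le> m"
  shows "tar \<alpha> \<beta> r Y0 \<epsilon> k \<omega> =
    tar \<alpha> \<beta> r (\<lambda>x. x 0) (\<lambda>t x. x t) k (restrict (\<lambda>i. (if i = 0 then Y0 else \<epsilon> i) \<omega>) {..m})"
  using assms by (induction k) auto

context prob_space
begin

lemma first_passage_indep:
  fixes \<epsilon> :: "nat \<Rightarrow> 'a \<Rightarrow> real"
  assumes indep: "indep_vars (\<lambda>_. borel) (\<lambda>t. if t = 0 then Y0 else \<epsilon> t) UNIV" and "m < t"
  shows "prob ({\<omega>\<in>space M. first_passage (tar \<alpha> \<beta> r Y0 \<epsilon>) K m \<omega>} \<inter> {\<omega>\<in>space M. \<epsilon> t \<omega> < z}) =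
    prob {\<omega>\<in>space M. first_passage (tar \<alpha> \<beta> r Y0 \<epsilon>) K m \<omega>} * prob {\<omega>\<in>space M. \<epsilon> t \<omega> < z}"
proof -
  define X where "X = (\<lambda>t. if t = 0 then Y0 else \<epsilon> t)"
  define past where "past \<omega> = restrict (\<lambda>i. X i \<omega>) {..m}" for \<omega>
  define future where "future \<omega> = restrict (\<lambda>i. X i \<omega>) {t}" for \<omega>
  define Sa where "Sa = {x\<in>space (PiM {..m} (\<lambda>_. borel)). first_passage (tar \<alpha> \<beta> r (\<lambda>x. x 0) (\<lambda>t x. x t)) K m x}"
  define Sb where "Sb = {x\<in>space (PiM {t} (\<lambda>_. borel) :: (nat \<Rightarrow> real) measure). x t < z}"
  have indep_past_future: "indep_var (PiM {..m} (\<lambda>_. borel)) past (PiM {t} (\<lambda>_. borel)) future"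
    unfolding past_def future_def
    by (rule indep_var_restrict[OF indep[folded X_def]]) (use \<open>m < t\<close> in auto)
  have Sa: "Sa \<in> sets (PiM {..m} (\<lambda>_. borel))"
    unfolding Sa_def by (intro first_passage_sets tar_measurable component_measurable_PiM)
  have Sb: "Sb \<in> sets (PiM {t} (\<lambda>_. borel))"
    using component_measurable_PiM[of t "{t}"] unfolding Sb_def by measurable
  have past_event: "past -` Sa \<inter> space M = {\<omega>\<in>space M. first_passage (tar \<alpha> \<beta> r Y0 \<epsilon>) K m \<omega>}"
    using tar_restrict[of _ m \<alpha> \<beta> r Y0 \<epsilon>]
    by (auto simp: Sa_def past_def X_def first_passage_def space_PiM)
  have future_event: "future -` Sb \<inter> space M = {\<omega>\<in>space M. \<epsilon> t \<omega> < z}"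
    using \<open>m < t\<close> by (auto simp: Sb_def future_def X_def space_PiM)
  have joint: "(\<lambda>\<omega>. (past \<omega>, future \<omega>)) -` (Sa \<times> Sb) \<inter> space M =
      (past -` Sa \<inter> space M) \<inter> (future -` Sb \<inter> space M)"
    by auto
  show ?thesis
    using indep_varD[OF indep_past_future Sa Sb] unfolding joint past_event future_event .
qed

lemma prob_union_le_of_product_bound:
  fixes A :: "nat \<Rightarrow> 'a set" and G :: "nat \<Rightarrow> nat \<Rightarrow> 'a set" and q :: "nat \<Rightarrow> real"
  assumes disj: "disjoint_family A" and A: "\<And>m. A m \<in> events" and G: "\<And>m j. G m j \<in> events"
    and bound: "\<And>m j. prob (A m \<inter> G m j) \<le> prob (A m) * q j"
    and q: "\<And>j. q j \<ge> 0" "summable q"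
  shows "prob (\<Union>m. \<Union>j. A m \<inter> G m j) \<le> suminf q"
proof -
  have "emeasure M (\<Union>m. \<Union>j. A m \<inter> G m j) \<le> (\<Sum>m. \<Sum>j. emeasure M (A m \<inter> G m j))"
    using A G by (intro order.trans[OF emeasure_subadditive_countably] suminf_le summableI
        emeasure_subadditive_countably) auto
  also have "\<dots> \<le> (\<Sum>m. \<Sum>j. ennreal (prob (A m)) * ennreal (q j))"
    using bound q(1) by (intro suminf_le summableI)
      (simp_all add: emeasure_eq_measure ennreal_mult[symmetric] ennreal_leI)
  also have "\<dots> = (\<Sum>m. emeasure M (A m)) * ennreal (suminf q)"
    using suminf_ennreal2[OF q] by (simp add: emeasure_eq_measure ennreal_suminf_cmult ennreal_suminf_multc)
  also have "\<dots> = emeasure M (\<Union>m. A m) * ennreal (suminf q)"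
    using A disj by (subst suminf_emeasure) auto
  also have "\<dots> \<le> ennreal (suminf q)"
    using mult_right_mono[OF emeasure_le_1[of "\<Union>m. A m"], of "ennreal (suminf q)"] by simp
  finally show ?thesis
    using q by (simp add: emeasure_eq_measure suminf_nonneg)
qed

lemma left_tail_bound:
  fixes X Z :: "'a \<Rightarrow> real"
  assumes "X \<in> borel_measurable M" "Z \<in> borel_measurable M" "distr M borel X = distr M borel Z"
    and "integrable M (\<lambda>\<omega>. (Z \<omega>)\<^sup>2)" and "x > 0"
  shows "prob {\<omega>\<in>space M. X \<omega> < - x} \<le> expectation (\<lambda>\<omega>. (Z \<omega>)\<^sup>2) / x\<^sup>2"
proof -
  have "prob {\<omega>\<in>space M. X \<omega> < - x} = prob {\<omega>\<in>space M. Z \<omega> < - x}"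
    using same_distr_prob[OF assms(1-3), of "{..< - x}"] by simp
  also have "\<dots> \<le> prob {\<omega>\<in>space M. (Z \<omega>)\<^sup>2 \<ge> x\<^sup>2}"
    using assms(2,5) by (intro finite_measure_mono) (auto simp: abs_le_square_iff[symmetric])
  also have "\<dots> \<le> expectation (\<lambda>\<omega>. (Z \<omega>)\<^sup>2) / x\<^sup>2"
    using assms(4,5) by (intro integral_Markov_inequality_measure[where A = "space M"]) auto
  finally show ?thesis .
qed

(* The escape events of lemma tar_escape at level K have total probability O(1/K^2): by independence
   and Chebyshev the (m,j)-term is at most P(first passage at m) * E eps_1^2 / ((alpha-1)/2 K g^j)^2. *)
lemma tar_escape_prob:
  fixes \<epsilon> :: "nat \<Rightarrow> 'a \<Rightarrow> real" and c g K :: real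
  assumes rv_eps: "\<And>t. t \<ge> 1 \<Longrightarrow> \<epsilon> t \<in> borel_measurable M"
    and rv_Y0: "Y0 \<in> borel_measurable M"
    and indep: "indep_vars (\<lambda>_. borel) (\<lambda>t. if t = 0 then Y0 else \<epsilon> t) UNIV"
    and ident: "\<And>t. t \<ge> 1 \<Longrightarrow> distr M borel (\<epsilon> t) = distr M borel (\<epsilon> 1)"
    and int2: "integrable M (\<lambda>\<omega>. (\<epsilon> 1 \<omega>)\<^sup>2)"
    and c: "c > 0" and g: "g > 1" and K: "K > 0"
  shows "prob (\<Union>m. \<Union>j. {\<omega>\<in>space M. first_passage (tar \<alpha> \<beta> r Y0 \<epsilon>) K m \<omega>} \<inter>
                           {\<omega>\<in>space M. \<epsilon> (m + 1 + j) \<omega> < - (c * K * g ^ j)})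
         \<le> expectation (\<lambda>\<omega>. (\<epsilon> 1 \<omega>)\<^sup>2) / (c * K)\<^sup>2 / (1 - 1 / g\<^sup>2)"
proof -
  define s2 where "s2 = expectation (\<lambda>\<omega>. (\<epsilon> 1 \<omega>)\<^sup>2)"
  define q where "q j = s2 / (c * K)\<^sup>2 * (1 / g\<^sup>2) ^ j" for j
  have "norm (1 / g\<^sup>2) < 1" using g by (simp add: power_less_one_iff)
  then have q_sums: "q sums (s2 / (c * K)\<^sup>2 * (1 / (1 - 1 / g\<^sup>2)))"
    unfolding q_def by (intro sums_mult geometric_sums)
  have "prob (\<Union>m. \<Union>j. {\<omega>\<in>space M. first_passage (tar \<alpha> \<beta> r Y0 \<epsilon>) K m \<omega>} \<inter>
                        {\<omega>\<in>space M. \<epsilon> (m + 1 + j) \<omega> < - (c * K * g ^ j)}) \<le> suminf q"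
  proof (rule prob_union_le_of_product_bound)
    show "disjoint_family (\<lambda>m. {\<omega>\<in>space M. first_passage (tar \<alpha> \<beta> r Y0 \<epsilon>) K m \<omega>})"
      by (auto simp: disjoint_family_on_def dest: first_passage_unique)
    show "{\<omega>\<in>space M. first_passage (tar \<alpha> \<beta> r Y0 \<epsilon>) K m \<omega>} \<in> events" for m
      by (intro first_passage_sets tar_measurable rv_eps rv_Y0)
    show "{\<omega>\<in>space M. \<epsilon> (m + 1 + j) \<omega> < - (c * K * g ^ j)} \<in> events" for m j
      using rv_eps[of "m + 1 + j"] by measurable
    show "q j \<ge> 0" for j using g by (simp add: q_def s2_def)
    show "summable q" using q_sums by (rule sums_summable)
    show "prob ({\<omega>\<in>space M. first_passage (tar \<alpha> \<beta> r Y0 \<epsilon>) K m \<omega>} \<inter>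
                {\<omega>\<in>space M. \<epsilon> (m + 1 + j) \<omega> < - (c * K * g ^ j)}) \<le>
          prob {\<omega>\<in>space M. first_passage (tar \<alpha> \<beta> r Y0 \<epsilon>) K m \<omega>} * q j" for m j
    proof -
      have "prob {\<omega>\<in>space M. \<epsilon> (m + 1 + j) \<omega> < - (c * K * g ^ j)} \<le> s2 / (c * K * g ^ j)\<^sup>2"
        unfolding s2_def using c g K
        by (intro left_tail_bound rv_eps ident int2) (auto intro: mult_pos_pos)
      also have "\<dots> = q j"
        by (simp add: q_def power_mult_distrib power_divide power_mult[symmetric] mult.commute)
      finally show ?thesis
        by (simp add: first_passage_indep[OF indep] mult_left_mono)
    qed
  qed
  then show ?thesis using sums_unique[OF q_sums] by (simp add: s2_def divide_inverse)
qed

(* Part (ii): if Y_n is a.s. unbounded above then Y_n / n tends to infinity a.s., since the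
   exceptional paths lie in escape events of arbitrarily small probability. *)
lemma tar_superlinear_AE:
  fixes \<epsilon> :: "nat \<Rightarrow> 'a \<Rightarrow> real"
  assumes rv_eps: "\<And>t. t \<ge> 1 \<Longrightarrow> \<epsilon> t \<in> borel_measurable M"
    and rv_Y0: "Y0 \<in> borel_measurable M"
    and indep: "indep_vars (\<lambda>_. borel) (\<lambda>t. if t = 0 then Y0 else \<epsilon> t) UNIV"
    and ident: "\<And>t. t \<ge> 1 \<Longrightarrow> distr M borel (\<epsilon> t) = distr M borel (\<epsilon> 1)"
    and int2: "integrable M (\<lambda>\<omega>. (\<epsilon> 1 \<omega>)\<^sup>2)"
    and \<alpha>: "\<alpha> > 1"
    and unbounded: "AE \<omega> in M. limsup (\<lambda>n. ereal (tar \<alpha> \<beta> r Y0 \<epsilon> n \<omega>)) = \<infinity>"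
  shows "AE \<omega> in M. filterlim (\<lambda>n. tar \<alpha> \<beta> r Y0 \<epsilon> n \<omega> / real n) at_top sequentially"
proof -
  define c where "c = (\<alpha> - 1) / 2"
  define g where "g = (\<alpha> + 1) / 2"
  have c: "c > 0" and g: "g > 1" using \<alpha> by (simp_all add: c_def g_def)
  define Bad where "Bad K = (\<Union>m. \<Union>j. {\<omega>\<in>space M. first_passage (tar \<alpha> \<beta> r Y0 \<epsilon>) K m \<omega>} \<inter>
                                  {\<omega>\<in>space M. \<epsilon> (m + 1 + j) \<omega> < - (c * K * g ^ j)})" for K
  define D where "D = expectation (\<lambda>\<omega>. (\<epsilon> 1 \<omega>)\<^sup>2) / c\<^sup>2 / (1 - 1 / g\<^sup>2)"
  have [measurable]: "{\<omega>\<in>space M. first_passage (tar \<alpha> \<beta> r Y0 \<epsilon>) K m \<omega>} \<in> events" for K m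
    by (intro first_passage_sets tar_measurable rv_eps rv_Y0)
  have [measurable]: "{\<omega>\<in>space M. \<epsilon> (m + 1 + j) \<omega> < x} \<in> events" for m j x
    using rv_eps[of "m + 1 + j"] by measurable
  have Bad_events: "Bad K \<in> events" for K
    unfolding Bad_def by measurable
  have Bad_prob: "prob (Bad K) \<le> D / K\<^sup>2" if "K > 0" for K
    using tar_escape_prob[OF rv_eps rv_Y0 indep ident int2 c g that, of \<alpha> \<beta> r]
    by (simp add: Bad_def D_def power_mult_distrib mult_ac)
  define K0 where "K0 = max r 0 + 1"
  define N where "N = (\<Inter>i. Bad (K0 + real i))"
  text \<open>Every bad trajectory lies in \<open>Bad K\<close> for all large \<open>K\<close>, which has probability \<open>O(1/K\<^sup>2)\<close>.\<close>
  have "prob N \<le> 0"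
  proof (rule LIMSEQ_le_const)
    show "(\<lambda>i. D / (K0 + real i)\<^sup>2) \<longlonglongrightarrow> 0" by real_asymp
    show "\<exists>n0. \<forall>n\<ge>n0. prob N \<le> D / (K0 + real n)\<^sup>2"
    proof (intro exI allI impI)
      fix n :: nat
      have "prob N \<le> prob (Bad (K0 + real n))"
        unfolding N_def using Bad_events by (intro finite_measure_mono) auto
      also have "\<dots> \<le> D / (K0 + real n)\<^sup>2" by (rule Bad_prob) (simp add: K0_def)
      finally show "prob N \<le> D / (K0 + real n)\<^sup>2" .
    qed
  qed
  then have "prob N = 0" using measure_nonneg[of M N] by linarith
  moreover have "N \<in> events" unfolding N_def using Bad_events by auto
  ultimately have "N \<in> null_sets M" by (simp add: null_sets_def emeasure_eq_measure)
  then have "AE \<omega> in M. limsup (\<lambda>n. ereal (tar \<alpha> \<beta> r Y0 \<epsilon> n \<omega>)) = \<infinity> \<longrightarrow>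
                         filterlim (\<lambda>n. tar \<alpha> \<beta> r Y0 \<epsilon> n \<omega> / real n) at_top sequentially"
  proof (rule AE_I')
    show "{\<omega>\<in>space M. \<not> (limsup (\<lambda>n. ereal (tar \<alpha> \<beta> r Y0 \<epsilon> n \<omega>)) = \<infinity> \<longrightarrow>
            filterlim (\<lambda>n. tar \<alpha> \<beta> r Y0 \<epsilon> n \<omega> / real n) at_top sequentially)} \<subseteq> N"
      using tar_escape[OF \<alpha>, of "K0 + real _" r \<beta> Y0 \<epsilon>]
      by (fastforce simp: N_def Bad_def K0_def c_def g_def)
  qed
  with unbounded show ?thesis by eventually_elim blast
qed

end

(* Both (H1) and (H2) give alpha > 1 and beta <= 1; together with independence,
   identical distribution and the second moments this is all the argument needs. *)
theorem lemma4p1: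
  fixes M :: "'a measure" and \<epsilon> :: "nat \<Rightarrow> 'a \<Rightarrow> real" and Y0 :: "'a \<Rightarrow> real"
    and \<alpha> \<beta> r :: real
  assumes "prob_space M"
    and rv_eps: "\<And>t. t \<ge> 1 \<Longrightarrow> \<epsilon> t \<in> borel_measurable M"
    and rv_Y0: "Y0 \<in> borel_measurable M"
    and indep: "prob_space.indep_vars M (\<lambda>_. borel) (\<lambda>t. if t = 0 then Y0 else \<epsilon> t) UNIV"
    and ident: "\<And>t. t \<ge> 1 \<Longrightarrow> distr M borel (\<epsilon> t) = distr M borel (\<epsilon> 1)"
    and int1: "integrable M (\<epsilon> 1)"
    and mean0: "prob_space.expectation M (\<epsilon> 1) = 0"
    and int2: "integrable M (\<lambda>\<omega>. (\<epsilon> 1 \<omega>)\<^sup>2)"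
    and varpos: "prob_space.expectation M (\<lambda>\<omega>. (\<epsilon> 1 \<omega>)\<^sup>2) > 0"
    and Y0sq: "integrable M (\<lambda>\<omega>. (Y0 \<omega>)\<^sup>2)"
    and hyp: "(\<alpha> > 1 \<and> \<beta> \<le> 1 \<and> r = 0) \<or>
              (\<alpha> > 1 \<and> \<beta> \<le> 1 \<and> r \<noteq> 0 \<and>
                 (\<forall>x. prob_space.prob M {\<omega> \<in> space M. \<epsilon> 1 \<omega> \<le> x} < 1))"
  defines "Y \<equiv> tar \<alpha> \<beta> r Y0 \<epsilon>"
  shows "((\<forall>n. integrable M (Y n)) \<and>
          (\<lambda>n. prob_space.expectation M (\<lambda>\<omega>. \<bar>Y n \<omega>\<bar>)) \<in> O(\<lambda>n. \<alpha> ^ n)) \<and>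
         ((AE \<omega> in M. limsup (\<lambda>n. ereal (Y n \<omega>)) = \<infinity>) \<longrightarrow>
         (AE \<omega> in M. filterlim (\<lambda>n. Y n \<omega> / real n) at_top sequentially))"
proof -
  interpret prob_space M by fact
  have \<alpha>: "\<alpha> > 1" and \<beta>: "\<beta> \<le> 1" using hyp by auto
  have int_Y0: "integrable M Y0"
    using square_integrable_imp_integrable[OF rv_Y0 Y0sq] .
  have int_eps: "integrable M (\<epsilon> t)" if "t \<ge> 1" for t
    by (rule innovations_integrable[where \<epsilon> = \<epsilon>, OF rv_eps ident int1 that])
  have "integrable M (Y n)" for n
    unfolding Y_def by (rule tar_integrable[where \<epsilon> = \<epsilon>, OF rv_eps rv_Y0 int_eps int_Y0])
  moreover have "(\<lambda>n. expectation (\<lambda>\<omega>. \<bar>Y n \<omega>\<bar>)) \<in> O(\<lambda>n. \<alpha> ^ n)"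
    unfolding Y_def by (rule tar_expectation_abs_bigo[where \<epsilon> = \<epsilon>, OF rv_eps rv_Y0 ident int_eps int_Y0 \<alpha> \<beta>])
  moreover have "(AE \<omega> in M. limsup (\<lambda>n. ereal (Y n \<omega>)) = \<infinity>) \<longrightarrow>
      (AE \<omega> in M. filterlim (\<lambda>n. Y n \<omega> / real n) at_top sequentially)"
    unfolding Y_def by (intro impI tar_superlinear_AE[where \<epsilon> = \<epsilon>, OF rv_eps rv_Y0 indep ident int2 \<alpha>])
  ultimately show ?thesis by blast
qed

end
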